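(* Let $k\ge2$, let $I$ be a purified instance relative to $C_k$, and let $I=I_1\cup\dots\cup I_m$, where $I_j$ consists of the tuples of $I$ whose corresponding edges lie in the $j$-th strongly connected component of $F_{C_k}(I)$. Then the frugal repairs of $I$ for $C_k$ are exactly the sets $r_1\cup\dots\cup r_m$ where, for each $j$, $r_j$ is a frugal repair of $I_j$ for $C_k$ (chosen independently).
   Context: $C_k=R_1(\underline{x_1},x_2),\dots,R_k(\underline{x_k},x_1)$, $k\ge2$, first attribute the key, relations of consistent or inconsistent type. A repair is a maximal subset satisfying all key constraints; $C_k^f(r)$ is the set of satisfying valuations $(a_1,\dots,a_k)$; a repair $r$ of $I$ is frugal if no repair $r'$ of $I$ has $C_k^f(r')\subsetneq C_k^f(r)$. $I$ is purified relative to $C_k$ if every tuple occurs in some tuple of $C_k^f(I)$. The instance graph $F_{C_k}(I)$ has the constants as vertices and an edge $(a,b)$ per tuple $R_i(a,b)$; constants in positions of distinct variables are distinct. For purified $I$, every edge of $F_{C_k}(I)$ has both endpoints in one strongly connected component. *)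

theory Defs
  imports Main
begin

text \<open>Query C_k = R_0(x_0,x_1), R_1(x_1,x_2), ..., R_(k-1)(x_(k-1),x_0)
  (0-indexed version of R_1(x_1,x_2),...,R_k(x_k,x_1)).
  A fact R_i(a,b) is encoded as the triple (i, a, b); the first attribute a is the key.\<close>

type_synonym 'c fact = "nat \<times> 'c \<times> 'c"

definition wf_instance :: "nat \<Rightarrow> 'c fact set \<Rightarrow> bool" where
  "wf_instance k I \<longleftrightarrow> finite I \<and> (\<forall>(i, a, b) \<in> I. i < k)"

definition key_consistent :: "'c fact set \<Rightarrow> bool" where
  "key_consistent r \<longleftrightarrow> (\<forall>i a b b'. (i, a, b) \<in> r \<longrightarrow> (i, a, b') \<in> r \<longrightarrow> b = b')"

definition is_repair :: "'c fact set \<Rightarrow> 'c fact set \<Rightarrow> bool" where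
  "is_repair I r \<longleftrightarrow> r \<subseteq> I \<and> key_consistent r \<and>
     (\<forall>r'. r \<subset> r' \<longrightarrow> r' \<subseteq> I \<longrightarrow> \<not> key_consistent r')"

text \<open>C_k^f(r): satisfying valuations (a_0,...,a_(k-1)), given as lists of length k.\<close>
definition sat :: "nat \<Rightarrow> 'c fact set \<Rightarrow> 'c list set" where
  "sat k r = {as. length as = k \<and> (\<forall>i<k. (i, as ! i, as ! ((i + 1) mod k)) \<in> r)}"

definition frugal_repair :: "nat \<Rightarrow> 'c fact set \<Rightarrow> 'c fact set \<Rightarrow> bool" where
  "frugal_repair k I r \<longleftrightarrow> is_repair I r \<and> \<not> (\<exists>r'. is_repair I r' \<and> sat k r' \<subset> sat k r)"

definition purified :: "nat \<Rightarrow> 'c fact set \<Rightarrow> bool" where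
  "purified k I \<longleftrightarrow> (\<forall>f \<in> I. \<exists>as \<in> sat k I. \<exists>i<k. f = (i, as ! i, as ! ((i + 1) mod k)))"

text \<open>CTtants in positions of distinct variables are distinct. In R_i(a,b),
  a sits at a position of variable x_i and b at a position of x_((i+1) mod k).\<close>
definition distinct_var_constants :: "nat \<Rightarrow> 'c fact set \<Rightarrow> bool" where
  "distinct_var_constants k I \<longleftrightarrow>
     (\<forall>(i, a, b) \<in> I. \<forall>(j, c, d) \<in> I.
        (a = c \<longrightarrow> i = j) \<and> (b = d \<longrightarrow> (i + 1) mod k = (j + 1) mod k) \<and>
        (a = d \<longrightarrow> i = (j + 1) mod k) \<and> (b = c \<longrightarrow> (i + 1) mod k = j))"

definition consistent_on :: "nat set \<Rightarrow> 'c fact set \<Rightarrow> bool" where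
  "consistent_on CT I \<longleftrightarrow> (\<forall>i \<in> CT. key_consistent {f \<in> I. fst f = i})"

definition inst_edges :: "'c fact set \<Rightarrow> ('c \<times> 'c) set" where
  "inst_edges I = {(a, b). \<exists>i. (i, a, b) \<in> I}"

definition inst_sccs :: "'c fact set \<Rightarrow> 'c set set" where
  "inst_sccs I = {C. \<exists>v \<in> Field (inst_edges I).
       C = {w. (v, w) \<in> (inst_edges I)\<^sup>* \<and> (w, v) \<in> (inst_edges I)\<^sup>*}}"

definition comp_part :: "'c fact set \<Rightarrow> 'c set \<Rightarrow> 'c fact set" where
  "comp_part I C = {(i, a, b) \<in> I. a \<in> C \<and> b \<in> C}"

end

theory Submission
  imports Defs
begin

text \<open>Every tuple of a purified instance lies on a satisfying valuation, i.e. on a cycle of the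
  instance graph, so its two constants lie in one strongly connected component; likewise every
  satisfying valuation of a repair is a cycle inside one component. Hence the components split
  both the key groups and the satisfying valuations, repairs are exactly unions of repairs of the
  parts, and C_k^f of such a union is the disjoint union of the parts' C_k^f. Comparing
  C_k^f-sets is therefore done componentwise, which makes frugality componentwise as well.\<close>

lemma is_repair_iff:
  "is_repair I r \<longleftrightarrow> r \<subseteq> I \<and> key_consistent r \<and>
     (\<forall>i a b. (i, a, b) \<in> I \<longrightarrow> (\<exists>b'. (i, a, b') \<in> r))"
proof
  assume R: "is_repair I r"
  have "\<exists>b'. (i, a, b') \<in> r" if "(i, a, b) \<in> I" for i a b
  proof (rule ccontr)
    assume missing: "\<nexists>b'. (i, a, b') \<in> r"
    then have "r \<subset> insert (i, a, b) r" by blast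
    moreover have "key_consistent (insert (i, a, b) r)"
      using R missing unfolding is_repair_def key_consistent_def by blast
    moreover have "insert (i, a, b) r \<subseteq> I" using R that unfolding is_repair_def by blast
    ultimately show False using R unfolding is_repair_def by blast
  qed
  with R show "r \<subseteq> I \<and> key_consistent r \<and> (\<forall>i a b. (i, a, b) \<in> I \<longrightarrow> (\<exists>b'. (i, a, b') \<in> r))"
    unfolding is_repair_def by blast
next
  assume R: "r \<subseteq> I \<and> key_consistent r \<and> (\<forall>i a b. (i, a, b) \<in> I \<longrightarrow> (\<exists>b'. (i, a, b') \<in> r))"
  have "\<not> key_consistent r'" if "r \<subset> r'" "r' \<subseteq> I" for r'
  proof
    assume consistent: "key_consistent r'"
    obtain i a b where new: "(i, a, b) \<in> r'" "(i, a, b) \<notin> r" using \<open>r \<subset> r'\<close> by auto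
    then obtain b' where "(i, a, b') \<in> r" using R \<open>r' \<subseteq> I\<close> by blast
    with new consistent \<open>r \<subset> r'\<close> show False unfolding key_consistent_def by blast
  qed
  with R show "is_repair I r" unfolding is_repair_def by blast
qed

lemma sat_mono: "r \<subseteq> r' \<Longrightarrow> sat k r \<subseteq> sat k r'"
  unfolding sat_def by blast

lemma sat_fact:
  assumes "as \<in> sat k r" "0 < k"
  shows "(0, as ! 0, as ! (1 mod k)) \<in> r"
  using assms unfolding sat_def by auto

locale separating_partition =
  fixes k :: nat and I :: "'c fact set" and S :: "'i set" and P :: "'i \<Rightarrow> 'c fact set"
  assumes k_pos: "0 < k"
    and part_subset: "C \<in> S \<Longrightarrow> P C \<subseteq> I"
    and covers: "I \<subseteq> (\<Union>C\<in>S. P C)"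
    and same_key_same_part:
      "\<lbrakk>C \<in> S; D \<in> S; (i, a, b) \<in> P C; (i, a, b') \<in> P D\<rbrakk> \<Longrightarrow> C = D"
    and sat_in_some_part: "\<lbrakk>r \<subseteq> I; as \<in> sat k r\<rbrakk> \<Longrightarrow> \<exists>C\<in>S. as \<in> sat k (r \<inter> P C)"
begin

lemma key_closed_part:
  assumes "C \<in> S" "(i, a, b) \<in> P C" "(i, a, b') \<in> I"
  shows "(i, a, b') \<in> P C"
  using covers same_key_same_part assms by blast

lemma Union_restrict: "r \<subseteq> I \<Longrightarrow> r = (\<Union>C\<in>S. r \<inter> P C)"
  using covers by blast

lemma Union_Int_part:
  assumes "\<forall>D\<in>S. rho D \<subseteq> P D" "C \<in> S"
  shows "(\<Union>D\<in>S. rho D) \<inter> P C = rho C"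
  using assms same_key_same_part by fast

lemma sat_part_unique:
  assumes "C \<in> S" "D \<in> S" "as \<in> sat k (P C)" "as \<in> sat k (P D)"
  shows "C = D"
  using same_key_same_part[OF assms(1,2)] sat_fact[OF assms(3) k_pos] sat_fact[OF assms(4) k_pos] .

lemma is_repair_restrict:
  assumes "is_repair I r" "C \<in> S"
  shows "is_repair (P C) (r \<inter> P C)"
  unfolding is_repair_iff
proof (intro conjI allI impI)
  show "r \<inter> P C \<subseteq> P C" by blast
  show "key_consistent (r \<inter> P C)"
    using assms(1) unfolding is_repair_iff key_consistent_def by blast
  fix i a b assume "(i, a, b) \<in> P C"
  moreover obtain b' where "(i, a, b') \<in> r"
    using assms part_subset \<open>(i, a, b) \<in> P C\<close> unfolding is_repair_iff by blast
  ultimately show "\<exists>b'. (i, a, b') \<in> r \<inter> P C"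
    using key_closed_part[OF assms(2)] assms(1) unfolding is_repair_iff by blast
qed

lemma is_repair_Union:
  assumes "\<forall>C\<in>S. is_repair (P C) (rho C)"
  shows "is_repair I (\<Union>C\<in>S. rho C)"
  unfolding is_repair_iff
proof (intro conjI allI impI)
  have sub: "\<forall>C\<in>S. rho C \<subseteq> P C" using assms unfolding is_repair_iff by blast
  then show "(\<Union>C\<in>S. rho C) \<subseteq> I" using part_subset by blast
  show "key_consistent (\<Union>C\<in>S. rho C)" unfolding key_consistent_def
  proof (intro allI impI)
    fix i a b b' assume "(i, a, b) \<in> (\<Union>C\<in>S. rho C)" "(i, a, b') \<in> (\<Union>C\<in>S. rho C)"
    then obtain C D where CD: "C \<in> S" "D \<in> S" "(i, a, b) \<in> rho C" "(i, a, b') \<in> rho D"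
      by blast
    then have "C = D" using sub same_key_same_part by blast
    moreover have "key_consistent (rho C)" using assms CD(1) unfolding is_repair_iff by blast
    ultimately show "b = b'" using CD(3,4) unfolding key_consistent_def by blast
  qed
  fix i a b assume "(i, a, b) \<in> I"
  then obtain C where "C \<in> S" "(i, a, b) \<in> P C" using covers by blast
  moreover from this obtain b' where "(i, a, b') \<in> rho C" using assms unfolding is_repair_iff by blast
  ultimately show "\<exists>b'. (i, a, b') \<in> (\<Union>C\<in>S. rho C)" by blast
qed

lemma sat_restrict_iff:
  assumes "r \<subseteq> I" "C \<in> S" "as \<in> sat k (P C)"
  shows "as \<in> sat k (r \<inter> P C) \<longleftrightarrow> as \<in> sat k r"
proof
  assume "as \<in> sat k r"
  then obtain D where "D \<in> S" "as \<in> sat k (r \<inter> P D)" using sat_in_some_part assms(1) by blast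
  moreover from this have "D = C"
    using sat_part_unique[OF _ assms(2) _ assms(3)] sat_mono[of "r \<inter> P D" "P D"] by blast
  ultimately show "as \<in> sat k (r \<inter> P C)" by simp
qed (use sat_mono in blast)

lemma frugal_repair_restrict:
  assumes frugal: "frugal_repair k I r" and "C \<in> S"
  shows "frugal_repair k (P C) (r \<inter> P C)"
  unfolding frugal_repair_def
proof (intro conjI notI)
  have R: "is_repair I r" using frugal unfolding frugal_repair_def by blast
  then show "is_repair (P C) (r \<inter> P C)" using is_repair_restrict \<open>C \<in> S\<close> by blast
  assume "\<exists>r'. is_repair (P C) r' \<and> sat k r' \<subset> sat k (r \<inter> P C)"
  then obtain r' where r': "is_repair (P C) r'" "sat k r' \<subset> sat k (r \<inter> P C)" by blast
  define rho where "rho D = (if D = C then r' else r \<inter> P D)" for D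
  have rho_repairs: "\<forall>D\<in>S. is_repair (P D) (rho D)"
    unfolding rho_def using r'(1) is_repair_restrict[OF R] by auto
  have rho_parts: "\<forall>D\<in>S. rho D \<subseteq> P D" using rho_repairs unfolding is_repair_iff by blast
  define r'' where "r'' = (\<Union>D\<in>S. rho D)"
  have R'': "is_repair I r''" unfolding r''_def using is_repair_Union[OF rho_repairs] .
  then have "r'' \<subseteq> I" unfolding is_repair_def by blast
  have "sat k r'' \<subseteq> sat k r"
  proof
    fix as assume "as \<in> sat k r''"
    then obtain D where "D \<in> S" "as \<in> sat k (rho D)"
      using sat_in_some_part[OF \<open>r'' \<subseteq> I\<close>] Union_Int_part[OF rho_parts] unfolding r''_def by metis
    then show "as \<in> sat k r"
      using r'(2) sat_mono[of "r \<inter> P D" r] unfolding rho_def by (auto split: if_splits)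
  qed
  moreover obtain as where as: "as \<in> sat k (r \<inter> P C)" "as \<notin> sat k r'" using r'(2) by blast
  have "as \<notin> sat k r''"
  proof
    assume "as \<in> sat k r''"
    moreover have "as \<in> sat k (P C)" using as(1) sat_mono[of "r \<inter> P C"] by blast
    ultimately have "as \<in> sat k (r'' \<inter> P C)" using sat_restrict_iff \<open>r'' \<subseteq> I\<close> \<open>C \<in> S\<close> by blast
    then show False using as(2) Union_Int_part[OF rho_parts \<open>C \<in> S\<close>]
      unfolding r''_def rho_def by simp
  qed
  moreover have "as \<in> sat k r" using as(1) sat_mono[of "r \<inter> P C" r] by blast
  ultimately have "sat k r'' \<subset> sat k r" by blast
  with R'' frugal show False unfolding frugal_repair_def by blast
qed

lemma frugal_repair_Union:
  assumes frugal: "\<forall>C\<in>S. frugal_repair k (P C) (rho C)"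
  shows "frugal_repair k I (\<Union>C\<in>S. rho C)" (is "frugal_repair k I ?r")
  unfolding frugal_repair_def
proof (intro conjI notI)
  have repairs: "\<forall>C\<in>S. is_repair (P C) (rho C)" using frugal unfolding frugal_repair_def by blast
  then have parts: "\<forall>C\<in>S. rho C \<subseteq> P C" unfolding is_repair_iff by blast
  show R: "is_repair I ?r" using is_repair_Union[OF repairs] .
  then have "?r \<subseteq> I" unfolding is_repair_def by blast
  assume "\<exists>r'. is_repair I r' \<and> sat k r' \<subset> sat k ?r"
  then obtain r' where r': "is_repair I r'" "sat k r' \<subset> sat k ?r" by blast
  then have "r' \<subseteq> I" unfolding is_repair_def by blast
  obtain as where as: "as \<in> sat k ?r" "as \<notin> sat k r'" using r'(2) by blast
  then obtain C where C: "C \<in> S" "as \<in> sat k (rho C)"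
    using sat_in_some_part[OF \<open>?r \<subseteq> I\<close>] Union_Int_part[OF parts] by metis
  have "sat k (r' \<inter> P C) \<subseteq> sat k (rho C)"
  proof
    fix bs assume bs: "bs \<in> sat k (r' \<inter> P C)"
    then have "bs \<in> sat k (P C)" "bs \<in> sat k ?r"
      using r'(2) sat_mono[of "r' \<inter> P C"] by blast+
    then show "bs \<in> sat k (rho C)"
      using sat_restrict_iff[OF \<open>?r \<subseteq> I\<close> C(1)] Union_Int_part[OF parts C(1)] by simp
  qed
  moreover have "as \<notin> sat k (r' \<inter> P C)" using as(2) sat_mono[of "r' \<inter> P C" r'] by blast
  ultimately have "sat k (r' \<inter> P C) \<subset> sat k (rho C)" using C(2) by blast
  then show False using frugal C(1) is_repair_restrict[OF r'(1) C(1)]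
    unfolding frugal_repair_def by blast
qed

theorem frugal_repair_iff_parts:
  "frugal_repair k I r \<longleftrightarrow>
    (\<exists>rho. (\<forall>C\<in>S. frugal_repair k (P C) (rho C)) \<and> r = (\<Union>C\<in>S. rho C))"
proof
  assume frugal: "frugal_repair k I r"
  then have "r \<subseteq> I" unfolding frugal_repair_def is_repair_def by blast
  show "\<exists>rho. (\<forall>C\<in>S. frugal_repair k (P C) (rho C)) \<and> r = (\<Union>C\<in>S. rho C)"
  proof (intro exI conjI)
    show "\<forall>C\<in>S. frugal_repair k (P C) (r \<inter> P C)" using frugal_repair_restrict[OF frugal] by blast
    show "r = (\<Union>C\<in>S. r \<inter> P C)" using Union_restrict[OF \<open>r \<subseteq> I\<close>] .
  qed
qed (auto intro: frugal_repair_Union)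

end

definition scc_of :: "('a \<times> 'a) set \<Rightarrow> 'a \<Rightarrow> 'a set" where
  "scc_of E v = {w. (v, w) \<in> E\<^sup>* \<and> (w, v) \<in> E\<^sup>*}"

lemma scc_of_eqI: "a \<in> scc_of E v \<Longrightarrow> scc_of E a = scc_of E v"
  unfolding scc_of_def by (auto intro: rtrancl_trans)

lemma scc_of_mono: "E \<subseteq> E' \<Longrightarrow> scc_of E v \<subseteq> scc_of E' v"
  unfolding scc_of_def using rtrancl_mono by blast

lemma inst_sccs_eq: "inst_sccs I = scc_of (inst_edges I) ` Field (inst_edges I)"
  unfolding inst_sccs_def scc_of_def by auto

lemma inst_edges_mono: "r \<subseteq> r' \<Longrightarrow> inst_edges r \<subseteq> inst_edges r'"
  unfolding inst_edges_def by blast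

lemma sat_path:
  assumes "as \<in> sat k r" "0 < k"
  shows "(as ! (p mod k), as ! ((p + m) mod k)) \<in> (inst_edges r)\<^sup>*"
proof (induction m)
  case (Suc m)
  define i where "i = (p + m) mod k"
  have "(i, as ! i, as ! ((i + 1) mod k)) \<in> r"
    using assms unfolding sat_def i_def by auto
  moreover have "(i + 1) mod k = (p + Suc m) mod k" unfolding i_def by (simp add: mod_Suc_eq)
  ultimately have "(as ! ((p + m) mod k), as ! ((p + Suc m) mod k)) \<in> inst_edges r"
    unfolding inst_edges_def i_def by auto
  with Suc show ?case by (rule rtrancl_into_rtrancl)
qed simp

lemma sat_in_scc_of:
  assumes "as \<in> sat k r" "i < k"
  shows "as ! i \<in> scc_of (inst_edges r) (as ! 0)"
proof -
  have "0 < k" using assms(2) by simp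
  have "(0 + i) mod k = i" "(i + (k - i)) mod k = 0" using assms(2) by simp_all
  then show ?thesis unfolding scc_of_def
    using sat_path[OF assms(1) \<open>0 < k\<close>, of 0 i] sat_path[OF assms(1) \<open>0 < k\<close>, of i "k - i"] assms(2)
    by simp
qed

lemma purified_fact_in_scc:
  assumes "purified k I" "(i, a, b) \<in> I"
  shows "b \<in> scc_of (inst_edges I) a"
proof -
  obtain as j where as: "as \<in> sat k I" "j < k" "a = as ! j" "b = as ! ((j + 1) mod k)"
    using assms unfolding purified_def by blast
  then have "a \<in> scc_of (inst_edges I) (as ! 0)" "b \<in> scc_of (inst_edges I) (as ! 0)"
    using sat_in_scc_of by fastforce+
  then show ?thesis using scc_of_eqI by metis
qed

lemma inst_sccs_member_eq:
  assumes "C \<in> inst_sccs I" "a \<in> C"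
  shows "C = scc_of (inst_edges I) a"
proof -
  obtain v where "C = scc_of (inst_edges I) v" using assms(1) unfolding inst_sccs_eq by blast
  with assms(2) show ?thesis using scc_of_eqI by metis
qed

lemma scc_of_in_inst_sccs:
  assumes "(i, a, b) \<in> I"
  shows "scc_of (inst_edges I) a \<in> inst_sccs I"
proof -
  have "a \<in> Field (inst_edges I)" using assms unfolding inst_edges_def Field_def by blast
  then show ?thesis unfolding inst_sccs_eq by blast
qed

lemma purified_fact_in_comp_part:
  assumes "purified k I" "(i, a, b) \<in> I"
  shows "(i, a, b) \<in> comp_part I (scc_of (inst_edges I) a)"
  using assms purified_fact_in_scc[OF assms] unfolding comp_part_def scc_of_def by simp

lemma sat_in_comp_part:
  assumes "r \<subseteq> I" "as \<in> sat k r"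
  shows "as \<in> sat k (r \<inter> comp_part I (scc_of (inst_edges I) (as ! 0)))"
proof -
  have in_scc: "as ! i \<in> scc_of (inst_edges I) (as ! 0)" if "i < k" for i
    using sat_in_scc_of[OF assms(2) that] scc_of_mono[OF inst_edges_mono[OF assms(1)]] by blast
  have "(i, as ! i, as ! ((i + 1) mod k)) \<in> comp_part I (scc_of (inst_edges I) (as ! 0))"
    if "i < k" for i
    using that assms in_scc[OF that] in_scc[of "(i + 1) mod k"] unfolding sat_def comp_part_def
    by auto
  then show ?thesis using assms(2) unfolding sat_def by blast
qed

lemma purified_separating_partition:
  assumes "0 < k" "purified k I"
  shows "separating_partition k I (inst_sccs I) (comp_part I)"
proof
  show "0 < k" by fact
  show "comp_part I C \<subseteq> I" for C unfolding comp_part_def by blast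
  show "I \<subseteq> (\<Union>C\<in>inst_sccs I. comp_part I C)"
  proof
    fix f assume "f \<in> I"
    obtain i a b where f: "f = (i, a, b)" by (cases f)
    have fact: "(i, a, b) \<in> I" using \<open>f \<in> I\<close> unfolding f .
    show "f \<in> (\<Union>C\<in>inst_sccs I. comp_part I C)"
      unfolding f
      by (rule UN_I[where B = "comp_part I",
            OF scc_of_in_inst_sccs[OF fact] purified_fact_in_comp_part[OF assms(2) fact]])
  qed
  show "C = D" if "C \<in> inst_sccs I" "D \<in> inst_sccs I"
    "(i, a, b) \<in> comp_part I C" "(i, a, b') \<in> comp_part I D" for C D i a b b'
  proof -
    have "a \<in> C" "a \<in> D" using that(3,4) unfolding comp_part_def by simp_all
    then show "C = D" using inst_sccs_member_eq that(1,2) by metis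
  qed
  show "\<exists>C\<in>inst_sccs I. as \<in> sat k (r \<inter> comp_part I C)" if "r \<subseteq> I" "as \<in> sat k r" for r as
  proof
    show "as \<in> sat k (r \<inter> comp_part I (scc_of (inst_edges I) (as ! 0)))"
      using sat_in_comp_part[OF that] .
    have "(0, as ! 0, as ! (1 mod k)) \<in> I" using sat_fact that assms(1) by blast
    then show "scc_of (inst_edges I) (as ! 0) \<in> inst_sccs I" by (rule scc_of_in_inst_sccs)
  qed
qed

theorem lemma4p4:
  fixes k :: nat and CT :: "nat set" and I :: "'c fact set" and r :: "'c fact set"
  assumes "k \<ge> 2"
    and "wf_instance k I"
    and "CT \<subseteq> {..<k}"
    and "consistent_on CT I"
    and "distinct_var_constants k I"
    and "purified k I"
  shows "frugal_repair k I r \<longleftrightarrow>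
    (\<exists>rho. (\<forall>C \<in> inst_sccs I. frugal_repair k (comp_part I C) (rho C)) \<and>
          r = (\<Union>C \<in> inst_sccs I. rho C))"
proof -
  interpret separating_partition k I "inst_sccs I" "comp_part I"
    using assms(1,6) by (intro purified_separating_partition) simp_all
  show ?thesis by (rule frugal_repair_iff_parts)
qed

end
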